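(* Let $n\geq 2$ and let $X=[1+ij]_{i,j=1}^n$. Then $X=ZDZ^T$, where \[ Z=\Big[L_n\Big(\tfrac{n+1}{n}\Big)L_{n-1}\Big(\tfrac{n}{n-1}\Big)\cdots L_2\Big(\tfrac{3}{2}\Big)\Big]\Big[L_n\Big(\tfrac{n-1}{n}\Big)L_{n-1}\Big(\tfrac{n-2}{n-1}\Big)\cdots L_3\Big(\tfrac{2}{3}\Big)\Big] \] and $D$ is the $n\times n$ diagonal matrix with $D_{11}=2$, $D_{22}=\tfrac12$, and $D_{kk}=0$ for $3\leq k\leq n$.
   Context: For a real number $s$ and $2\leq i\leq n$, $L_i(s)$ denotes the $n\times n$ matrix with all diagonal entries equal to $1$, $(i,i-1)$ entry equal to $s$, and all other entries zero. An empty product (when $n=2$) is the identity matrix. *)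

theory Defs
  imports "Jordan_Normal_Form.Matrix"
begin

text \<open>Matrices are Jordan_Normal_Form matrices, whose entries are indexed from 0.
  The paper's 1-based entry (i,j) is entry (i-1,j-1) here.\<close>

text \<open>L i s (of size n): ones on the diagonal, s at the paper's (i,i-1) entry,
  i.e. at 0-based position (i-1, i-2); zero elsewhere.\<close>
definition Lmat :: "nat \<Rightarrow> nat \<Rightarrow> real \<Rightarrow> real mat" where
  "Lmat n i s = mat n n (\<lambda>(r, c). if r = c then 1 else if r = i - 1 \<and> c = i - 2 then s else 0)"

text \<open>Ordered product L_{hi}(f hi) * L_{hi-1}(f (hi-1)) * ... * L_{lo}(f lo);
  the empty product (hi < lo) is the identity.\<close>
definition Lprod :: "nat \<Rightarrow> nat \<Rightarrow> nat \<Rightarrow> (nat \<Rightarrow> real) \<Rightarrow> real mat" where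
  "Lprod n hi lo f = foldr (\<lambda>k M. Lmat n k (f k) * M) (rev [lo..<Suc hi]) (1\<^sub>m n)"

definition Xmat :: "nat \<Rightarrow> real mat" where
  "Xmat n = mat n n (\<lambda>(i, j). 1 + real (i + 1) * real (j + 1))"

definition Zmat :: "nat \<Rightarrow> real mat" where
  "Zmat n = Lprod n n 2 (\<lambda>k. real (k + 1) / real k) * Lprod n n 3 (\<lambda>k. (real k - 1) / real k)"

definition Dmat :: "nat \<Rightarrow> real mat" where
  "Dmat n = mat n n (\<lambda>(i, j). if i = j then (if i = 0 then 2 else if i = 1 then 1/2 else 0) else 0)"

end

(* Z = P Q, where P and Q are the two bracketed products. A product L_hi(f hi) ... L_lo(f lo)
   is unit lower triangular with (r,c) entry f(c+2) ... f(r+1) (0-based indices). For P and Q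
   these products telescope: P(r,c) = (r+2)/(c+2) for c <= r, while the first column of Q is e_0
   and its second column is 2/(r+1) below the diagonal. So the first two columns of Z are
   (r+2)/2 and, by the telescoping sum of 1/((k+1)(k+2)), r. As D only sees these two columns,
   (Z D Z^T)(i,j) = 2 (i+2)/2 (j+2)/2 + i j/2 = 1 + (i+1)(j+1). *)

theory Submission
  imports Defs
begin

lemma Lprod_carrier [simp]: "Lprod n hi lo f \<in> carrier_mat n n"
proof -
  have "foldr (\<lambda>k M. Lmat n k (f k) * M) ks (1\<^sub>m n) \<in> carrier_mat n n" for ks
    by (induction ks) (auto simp: Lmat_def)
  then show ?thesis by (simp add: Lprod_def)
qed

lemma dim_Lprod [simp]: "dim_row (Lprod n hi lo f) = n" "dim_col (Lprod n hi lo f) = n"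
  by (meson Lprod_carrier carrier_matD)+

lemma Lprod_empty: "hi < lo \<Longrightarrow> Lprod n hi lo f = 1\<^sub>m n"
  by (simp add: Lprod_def)

lemma Lprod_Suc: "lo \<le> Suc hi \<Longrightarrow> Lprod n (Suc hi) lo f = Lmat n (Suc hi) (f (Suc hi)) * Lprod n hi lo f"
  by (simp add: Lprod_def)

lemma index_Lmat_mult:
  assumes "M \<in> carrier_mat n n" "2 \<le> h" "h \<le> n" "r < n" "c < n"
  shows "(Lmat n h s * M) $$ (r, c) = M $$ (r, c) + (if r = h - 1 then s * M $$ (h - 2, c) else 0)"
proof -
  have "(Lmat n h s * M) $$ (r, c) = (\<Sum>k<n. Lmat n h s $$ (r, k) * M $$ (k, c))"
    using assms by (simp add: Lmat_def scalar_prod_def atLeast0LessThan)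
  also have "\<dots> = (\<Sum>k<n. (if k = r then M $$ (k, c) else 0)
                      + (if r = h - 1 \<and> k = h - 2 then s * M $$ (k, c) else 0))"
    using assms by (intro sum.cong) (auto simp: Lmat_def)
  finally show ?thesis
    using assms by (simp add: sum.distrib)
qed

lemma index_Lprod:
  assumes "2 \<le> lo" "hi \<le> n" "r < n" "c < n"
  shows "Lprod n hi lo f $$ (r, c) =
    (if r = c then 1 else if c < r \<and> lo \<le> c + 2 \<and> r + 1 \<le> hi then \<Prod>k = c + 2..r + 1. f k else 0)"
  using assms
proof (induction hi arbitrary: r c)
  case 0
  then show ?case by (simp add: Lprod_empty)
next
  case (Suc hi)
  show ?case
  proof (cases "lo \<le> Suc hi")
    case False
    then show ?thesis using Suc.prems by (simp add: Lprod_empty)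
  next
    case True
    let ?P = "Lprod n hi lo f"
    have "1 \<le> hi" using True Suc.prems by simp
    have IH: "?P $$ (r', c) =
        (if r' = c then 1 else if c < r' \<and> lo \<le> c + 2 \<and> r' + 1 \<le> hi then \<Prod>k = c + 2..r' + 1. f k else 0)"
      if "r' < n" for r'
      using Suc that by simp
    have step: "Lprod n (Suc hi) lo f $$ (r, c) = ?P $$ (r, c) + (if r = hi then f (Suc hi) * ?P $$ (hi - 1, c) else 0)"
      using Suc.prems True by (simp add: Lprod_Suc index_Lmat_mult)
    show ?thesis
    proof (cases "r = hi \<and> c < hi")
      case False
      then show ?thesis using step IH Suc.prems \<open>1 \<le> hi\<close> by auto
    next
      case rc: True
      have "?P $$ (hi - 1, c) = (if lo \<le> c + 2 then \<Prod>k = c + 2..hi. f k else 0)"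
        using IH[of "hi - 1"] rc True Suc.prems by (cases "c + 1 = hi") auto
      moreover have "(\<Prod>k = c + 2..Suc hi. f k) = f (Suc hi) * (\<Prod>k = c + 2..hi. f k)"
        using rc by (simp add: prod.nat_ivl_Suc')
      ultimately show ?thesis using step IH Suc.prems rc by auto
    qed
  qed
qed

lemma index_mult_mat_diag_mult_transpose:
  assumes "A \<in> carrier_mat m n" "i < m" "j < m"
  shows "(A * mat_diag n d * transpose_mat A) $$ (i, j) = (\<Sum>k<n. A $$ (i, k) * d k * A $$ (j, k))"
  using assms by (simp add: mat_diag_mult_right scalar_prod_def atLeast0LessThan)

definition Zmat_left :: "nat \<Rightarrow> real mat" where
  "Zmat_left n = Lprod n n 2 (\<lambda>k. real (k + 1) / real k)"

definition Zmat_right :: "nat \<Rightarrow> real mat" where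
  "Zmat_right n = Lprod n n 3 (\<lambda>k. (real k - 1) / real k)"

lemma Zmat_eq_left_right: "Zmat n = Zmat_left n * Zmat_right n"
  by (simp add: Zmat_def Zmat_left_def Zmat_right_def)

lemma index_Zmat_left:
  assumes "r < n" "c < n"
  shows "Zmat_left n $$ (r, c) = (if c \<le> r then real (r + 2) / real (c + 2) else 0)"
proof -
  have "(\<Prod>k = c + 2..r + 1. real (k + 1) / real k) = real (r + 2) / real (c + 2)" if "c < r"
  proof -
    have "(\<Prod>k = c + 2..r + 1. real (k + 1) / real k) = (\<Prod>k = Suc (c + 1)..r + 1. real (k + 1) / real (k - 1 + 1))"
      by (intro prod.cong) auto
    also have "\<dots> = real (r + 2) / real (c + 2)"
      using that by (subst prod_telescope'') auto
    finally show ?thesis .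
  qed
  then show ?thesis
    using assms by (simp add: Zmat_left_def index_Lprod)
qed

lemma index_Zmat_right:
  assumes "r < n" "c < n"
  shows "Zmat_right n $$ (r, c) =
    (if c = 0 then (if r = 0 then 1 else 0) else if c \<le> r then real (c + 1) / real (r + 1) else 0)"
proof -
  have "(\<Prod>k = c + 2..r + 1. (real k - 1) / real k) = real (c + 1) / real (r + 1)" if "1 \<le> c" "c < r"
  proof -
    have "(\<Prod>k = c + 2..r + 1. (real k - 1) / real k) = (\<Prod>k = Suc (c + 1)..r + 1. (1 / real k) / (1 / real (k - 1)))"
      by (intro prod.cong) (auto simp: of_nat_diff)
    also have "\<dots> = real (c + 1) / real (r + 1)"
      using that by (subst prod_telescope'') auto
    finally show ?thesis .
  qed
  then show ?thesis
    using assms by (auto simp: Zmat_right_def index_Lprod)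
qed

lemma sum_inverse_consecutive_products:
  "(\<Sum>k = 1..r. 1 / (real (k + 1) * real (k + 2))) = 1 / 2 - 1 / real (r + 2)"
proof (induction r)
  case (Suc r)
  have "1 / (real (Suc r + 1) * real (Suc r + 2)) = 1 / real (r + 2) - 1 / real (Suc r + 2)"
    by (simp add: field_simps)
  with Suc show ?case
    by (simp add: sum.cl_ivl_Suc)
qed simp

lemma index_Zmat_col0:
  assumes "r < n"
  shows "Zmat n $$ (r, 0) = real (r + 2) / 2"
proof -
  have "Zmat n $$ (r, 0) = (\<Sum>k<n. Zmat_left n $$ (r, k) * Zmat_right n $$ (k, 0))"
    using assms by (simp add: Zmat_eq_left_right Zmat_left_def Zmat_right_def scalar_prod_def atLeast0LessThan)
  also have "\<dots> = (\<Sum>k<n. if k = 0 then Zmat_left n $$ (r, 0) else 0)"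
    by (intro sum.cong) (auto simp: index_Zmat_right)
  also have "\<dots> = Zmat_left n $$ (r, 0)"
    using assms by simp
  finally show ?thesis
    using assms by (simp add: index_Zmat_left)
qed

lemma index_Zmat_col1:
  assumes "r < n" "1 < n"
  shows "Zmat n $$ (r, 1) = real r"
proof -
  have "Zmat n $$ (r, 1) = (\<Sum>k<n. Zmat_left n $$ (r, k) * Zmat_right n $$ (k, 1))"
    using assms by (simp add: Zmat_eq_left_right Zmat_left_def Zmat_right_def scalar_prod_def atLeast0LessThan)
  also have "\<dots> = (\<Sum>k = 1..r. 2 * real (r + 2) * (1 / (real (k + 1) * real (k + 2))))"
    using assms by (intro sum.mono_neutral_cong_right) (auto simp: index_Zmat_left index_Zmat_right field_simps)
  also have "\<dots> = 2 * real (r + 2) * (1 / 2 - 1 / real (r + 2))"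
    by (simp only: sum_distrib_left[symmetric] sum_inverse_consecutive_products)
  also have "\<dots> = real r"
    by (simp add: field_simps)
  finally show ?thesis .
qed

lemma Dmat_eq_mat_diag: "Dmat n = mat_diag n (\<lambda>k. if k = 0 then 2 else if k = 1 then 1 / 2 else 0)"
  by (auto simp: Dmat_def mat_diag_def)

theorem corollary2p3:
  fixes n :: nat
  assumes "n \<ge> 2"
  shows "Xmat n = Zmat n * Dmat n * transpose_mat (Zmat n)"
proof (rule eq_matI)
  have Z: "Zmat n \<in> carrier_mat n n"
    unfolding Zmat_def by (rule mult_carrier_mat[OF Lprod_carrier Lprod_carrier])
  then show "dim_row (Xmat n) = dim_row (Zmat n * Dmat n * transpose_mat (Zmat n))"
    and "dim_col (Xmat n) = dim_col (Zmat n * Dmat n * transpose_mat (Zmat n))"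
    by (simp_all add: Xmat_def Dmat_def)
  fix i j assume "i < dim_row (Zmat n * Dmat n * transpose_mat (Zmat n))"
    and "j < dim_col (Zmat n * Dmat n * transpose_mat (Zmat n))"
  with Z have ij: "i < n" "j < n" by auto
  let ?d = "\<lambda>k. if k = 0 then 2 else if k = 1 then 1 / 2 else 0 :: real"
  have "(Zmat n * Dmat n * transpose_mat (Zmat n)) $$ (i, j) = (\<Sum>k<n. Zmat n $$ (i, k) * ?d k * Zmat n $$ (j, k))"
    unfolding Dmat_eq_mat_diag using Z ij by (rule index_mult_mat_diag_mult_transpose)
  also have "\<dots> = (\<Sum>k\<in>{0, 1}. Zmat n $$ (i, k) * ?d k * Zmat n $$ (j, k))"
    using assms by (intro sum.mono_neutral_right) auto
  also have "\<dots> = real (i + 2) / 2 * 2 * (real (j + 2) / 2) + real i * (1 / 2) * real j"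
    using assms ij index_Zmat_col1[of i n] index_Zmat_col1[of j n] by (simp add: index_Zmat_col0)
  also have "\<dots> = Xmat n $$ (i, j)"
    using ij by (simp add: Xmat_def field_simps)
  finally show "Xmat n $$ (i, j) = (Zmat n * Dmat n * transpose_mat (Zmat n)) $$ (i, j)" ..
qed

end
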